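(* Assume $\alpha\in(0,1)$ and fix $\gamma>0$. For every $\delta>0$ there exists $\varepsilon>0$ such that, for every sequence of positive integers $M=M(N)$ with $M(N)/N\to\gamma$, for all $N$ sufficiently large, $$\mathbf P\Big(|\tau\cap((0,N]\times(0,M])|\ge\varepsilon N^\alpha/L(N)\Big)\ge1-\delta.$$
   Context: Let $\mathbb N=\{1,2,\dots\}$. Fix a slowly varying function $L$, and set $K(n)=L(n)n^{-(2+\alpha)}$, normalized so that $\sum_{n,m\in\mathbb N}K(n+m)=1$. Let $\tau$ be a bivariate renewal process with law $\mathbf P$: $\tau_0=(0,0)$, i.i.d. increments with $\mathbf P(\tau_1=(n,m))=K(n+m)$, $n,m\in\mathbb N$; $\tau$ is identified with the random set of its points and $|\cdot|$ denotes cardinality. *)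

theory Defs
  imports "HOL-Probability.Probability"
begin

definition slowly_varying :: "(real \<Rightarrow> real) \<Rightarrow> bool" where
  "slowly_varying L \<longleftrightarrow> L \<in> borel_measurable borel \<and>
     (\<forall>\<^sub>F x in at_top. L x > 0) \<and>
     (\<forall>c>0. ((\<lambda>x. L (c * x) / L x) \<longlongrightarrow> 1) at_top)"

definition Kfun :: "real \<Rightarrow> (real \<Rightarrow> real) \<Rightarrow> nat \<Rightarrow> real" where
  "Kfun \<alpha> L n = L (real n) * real n powr (-(2 + \<alpha>))"

definition renewal_incr :: "real \<Rightarrow> (real \<Rightarrow> real) \<Rightarrow> (nat \<times> nat) pmf" where
  "renewal_incr \<alpha> L =
     embed_pmf (\<lambda>(n, m). if 1 \<le> n \<and> 1 \<le> m then Kfun \<alpha> L (n + m) else 0)"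

definition renewal_law :: "real \<Rightarrow> (real \<Rightarrow> real) \<Rightarrow> (nat \<times> nat) stream measure" where
  "renewal_law \<alpha> L = stream_space (measure_pmf (renewal_incr \<alpha> L))"

definition renewal_pt :: "(nat \<times> nat) stream \<Rightarrow> nat \<Rightarrow> nat \<times> nat" where
  "renewal_pt \<omega> k = ((\<Sum>i<k. fst (\<omega> !! i)), (\<Sum>i<k. snd (\<omega> !! i)))"

definition renewal_set :: "(nat \<times> nat) stream \<Rightarrow> (nat \<times> nat) set" where
  "renewal_set \<omega> = range (renewal_pt \<omega>)"

end

theory Submission
  imports Defs
begin

text \<open>Take k of order \<epsilon> N^\<alpha> / L N. If the first k increments of \<tau> have coordinate sums at most
  N and M, then \<tau>_1, ..., \<tau>_k are k distinct points of the box, since both coordinates of every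
  increment are positive. Write \<xi> for a coordinate of an increment; both coordinates have the same
  law because K only depends on n + m. Markov's inequality for the truncated sums of min \<xi>_i N
  bounds the probability that the first k increments overshoot by k E[min \<xi> N] / N + k E[min \<xi> M] / M.
  Since P(\<xi> = a) is of order L a a^(-1-\<alpha>), Potter's bounds give E[min \<xi> t] = O(L t t^(1-\<alpha>)),
  and M is comparable to N, so the failure probability is O(\<epsilon>) + O(L N N^(-\<alpha>)) = O(\<epsilon>) + o(1).\<close>

section \<open>Slowly varying functions: uniform convergence and Potter's bounds\<close>

lemma emeasure_lborel_translate:
  fixes c :: "'a::euclidean_space"
  assumes "B \<in> sets borel"
  shows "emeasure lborel ((+) c -` B) = emeasure lborel B"
proof -
  have "emeasure (distr lborel borel ((+) c)) B = emeasure lborel ((+) c -` B)"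
    using assms by (subst emeasure_distr) auto
  then show ?thesis by (simp add: lborel_distr_plus)
qed

lemma emeasure_exceptional_shifts_less:
  fixes h :: "real \<Rightarrow> real" and a :: "nat \<Rightarrow> real"
  assumes [measurable]: "h \<in> borel_measurable borel"
    and lim: "\<And>v. ((\<lambda>u. h (u + v) - h u) \<longlongrightarrow> 0) at_top"
    and "0 < e" "filterlim a at_top sequentially" "0 < c"
  shows "\<exists>m. emeasure lborel {w\<in>{0..b}. \<exists>n\<ge>m. e \<le> \<bar>h (a n + w) - h (a n)\<bar>} < c"
proof -
  define B where "B m = {w\<in>{0..b}. \<exists>n\<ge>m. e \<le> \<bar>h (a n + w) - h (a n)\<bar>}" for m
  have B_sets[measurable]: "B m \<in> sets borel" for m unfolding B_def by measurable
  have "emeasure lborel (B m) \<le> emeasure lborel {0..b}" for m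
    by (intro emeasure_mono) (auto simp: B_def)
  then have finite: "emeasure lborel (B m) \<noteq> \<infinity>" for m
    using neq_top_trans[of "emeasure lborel {0..b}"] by (simp add: emeasure_lborel_Icc_eq)
  have "(\<Inter>m. B m) = {}"
  proof safe
    fix w assume w: "w \<in> (\<Inter>m. B m)"
    have "((\<lambda>n. h (a n + w) - h (a n)) \<longlongrightarrow> 0) sequentially"
      using filterlim_compose[OF lim[of w] assms(4)] by simp
    then obtain m where "\<And>n. n \<ge> m \<Longrightarrow> \<bar>h (a n + w) - h (a n)\<bar> < e"
      using \<open>0 < e\<close> by (auto simp: tendsto_iff dist_real_def eventually_sequentially)
    with w show "w \<in> {}" by (force simp: B_def)
  qed
  moreover have "decseq B" unfolding decseq_def B_def by (auto intro: order_trans)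
  ultimately have "(INF m. emeasure lborel (B m)) = 0"
    using finite by (subst INF_emeasure_decseq) (auto simp: B_sets)
  then have "(INF m. emeasure lborel (B m)) < c" using \<open>0 < c\<close> by simp
  then show ?thesis by (auto simp: B_def INF_less_iff)
qed

lemma interval_avoids_small_sets:
  fixes A B :: "real set"
  assumes [measurable]: "A \<in> sets borel" "B \<in> sets borel"
    and small: "emeasure lborel A + emeasure lborel B < 1"
  shows "\<exists>w\<in>{c..c + 1}. w \<notin> A \<and> w - c \<notin> B"
proof (rule ccontr)
  assume "\<not> ?thesis"
  then have "{c..c + 1} \<subseteq> A \<union> (+) (- c) -` B" by auto
  moreover have [measurable]: "(+) (- c) -` B \<in> sets borel"
    by (intro measurable_sets_borel[where M = borel]) auto
  ultimately have "emeasure lborel {c..c + 1} \<le> emeasure lborel (A \<union> (+) (- c) -` B)"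
    by (intro emeasure_mono) auto
  also have "\<dots> \<le> emeasure lborel A + emeasure lborel ((+) (- c) -` B)"
    by (intro emeasure_subadditive) auto
  also have "\<dots> = emeasure lborel A + emeasure lborel B"
    by (simp add: emeasure_lborel_translate)
  finally show False using small by simp
qed

text \<open>The uniform convergence theorem in additive form, by the measure-theoretic argument of
  Csiszar and Erdos: if it failed along u n with shifts v n, then for large n some w in
  [v n, v n + 1] would be close to both u n and u n + v n in the sense of h.\<close>

lemma uniform_convergence_additive:
  fixes h :: "real \<Rightarrow> real"
  assumes [measurable]: "h \<in> borel_measurable borel"
    and lim: "\<And>v. ((\<lambda>u. h (u + v) - h u) \<longlongrightarrow> 0) at_top"
    and "0 < e"
  shows "\<exists>u0. \<forall>u\<ge>u0. \<forall>v\<in>{0..1}. \<bar>h (u + v) - h u\<bar> \<le> e"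
proof (rule ccontr)
  assume "\<not> ?thesis"
  then have "\<forall>n::nat. \<exists>u v. real n \<le> u \<and> v \<in> {0..1} \<and> e < \<bar>h (u + v) - h u\<bar>"
    by (meson not_le)
  then obtain u v where u: "\<And>n. real n \<le> u n" and v: "\<And>n. v n \<in> {0..1}"
    and uv: "\<And>n. e < \<bar>h (u n + v n) - h (u n)\<bar>"
    by metis
  define B1 where "B1 m = {w\<in>{0..2}. \<exists>n\<ge>m. e/2 \<le> \<bar>h (u n + w) - h (u n)\<bar>}" for m
  define B2 where "B2 m = {w\<in>{0..1}. \<exists>n\<ge>m. e/2 \<le> \<bar>h (u n + v n + w) - h (u n + v n)\<bar>}" for m
  have "filterlim u at_top sequentially"
    using u by (intro filterlim_at_top_mono[OF filterlim_real_sequentially]) auto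
  moreover have "filterlim (\<lambda>n. u n + v n) at_top sequentially"
    using u v by (intro filterlim_at_top_mono[OF filterlim_real_sequentially] always_eventually)
      (auto intro: add_increasing2)
  moreover have "0 < e/2" "(0::ennreal) < 1/2"
    using \<open>0 < e\<close> by (auto simp: ennreal_zero_less_divide)
  ultimately obtain m1 m2 where "emeasure lborel (B1 m1) < 1/2" "emeasure lborel (B2 m2) < 1/2"
    unfolding B1_def B2_def using emeasure_exceptional_shifts_less[OF assms(1) lim] by meson
  then have "emeasure lborel (B1 m1) + emeasure lborel (B2 m2) < 1"
    using add_strict_mono by (fastforce simp flip: add_divide_distrib_ennreal)
  moreover have "B1 m \<in> sets borel" "B2 m \<in> sets borel" for m
    unfolding B1_def B2_def by measurable
  moreover define n where "n = max m1 m2"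
  ultimately obtain w where "w \<in> {v n..v n + 1}" "w \<notin> B1 m1" "w - v n \<notin> B2 m2"
    using interval_avoids_small_sets by blast
  then have "\<bar>h (u n + w) - h (u n)\<bar> < e/2" "\<bar>h (u n + w) - h (u n + v n)\<bar> < e/2"
    using v[of n] by (auto simp: B1_def B2_def n_def not_le dest!: spec[where x = n])
  then show False using uv[of n] by linarith
qed

lemma slowly_varying_ln_increment:
  assumes "slowly_varying L"
  shows "((\<lambda>u. ln (L (exp (u + v))) - ln (L (exp u))) \<longlongrightarrow> 0) at_top"
proof -
  have pos: "\<forall>\<^sub>F x in at_top. 0 < L x" and ratio: "((\<lambda>x. L (exp v * x) / L x) \<longlongrightarrow> 1) at_top"
    using assms by (auto simp: slowly_varying_def)
  have exp_shift: "filterlim (\<lambda>u. exp v * exp u) at_top at_top"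
    by (rule filterlim_tendsto_pos_mult_at_top[OF tendsto_const _ exp_at_top]) simp
  have "((\<lambda>u. ln (L (exp v * exp u) / L (exp u))) \<longlongrightarrow> ln 1) at_top"
    by (intro tendsto_ln filterlim_compose[OF ratio exp_at_top]) simp
  moreover have "\<forall>\<^sub>F u in at_top. 0 < L (exp u) \<and> 0 < L (exp v * exp u)"
    using filterlim_iff[THEN iffD1, OF exp_at_top, rule_format, OF pos]
      filterlim_iff[THEN iffD1, OF exp_shift, rule_format, OF pos]
    by eventually_elim auto
  then have "\<forall>\<^sub>F u in at_top.
      ln (L (exp v * exp u) / L (exp u)) = ln (L (exp (u + v))) - ln (L (exp u))"
    by eventually_elim (simp add: ln_div exp_add mult.commute)
  ultimately show ?thesis by (simp add: tendsto_cong)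
qed

lemma slowly_varying_ratio_bound:
  assumes sv: "slowly_varying L" and "1 < \<theta>"
  shows "\<exists>x0>0. \<forall>x\<ge>x0. \<forall>s\<in>{1..2}. 0 < L x \<and> L (s * x) \<le> \<theta> * L x \<and> L x \<le> \<theta> * L (s * x)"
proof -
  have [measurable]: "L \<in> borel_measurable borel" and "\<forall>\<^sub>F x in at_top. 0 < L x"
    using sv by (auto simp: slowly_varying_def)
  then obtain X where X: "\<And>x. X \<le> x \<Longrightarrow> 0 < L x" by (auto simp: eventually_at_top_linorder)
  define h where "h u = ln (L (exp u))" for u
  have "h \<in> borel_measurable borel" unfolding h_def by measurable
  moreover have "((\<lambda>u. h (u + v) - h u) \<longlongrightarrow> 0) at_top" for v
    unfolding h_def by (rule slowly_varying_ln_increment[OF sv])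
  moreover have "0 < ln \<theta>" using \<open>1 < \<theta>\<close> by simp
  ultimately obtain u0 where u0: "\<And>u v. u0 \<le> u \<Longrightarrow> v \<in> {0..1} \<Longrightarrow> \<bar>h (u + v) - h u\<bar> \<le> ln \<theta>"
    using uniform_convergence_additive by blast
  define x0 where "x0 = max (exp u0) (max X 1)"
  have "0 < L x \<and> L (s * x) \<le> \<theta> * L x \<and> L x \<le> \<theta> * L (s * x)"
    if x: "x0 \<le> x" and s: "s \<in> {1..2}" for x s
  proof -
    have "0 < x" "u0 \<le> ln x" "0 < L x" using x X[of x] by (auto simp: x0_def ln_ge_iff)
    moreover have "x \<le> s * x" using \<open>0 < x\<close> s by simp
    then have "0 < L (s * x)" using x X[of "s * x"] by (simp add: x0_def)
    moreover have "ln s \<le> ln 2" "0 \<le> ln s" using s by auto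
    then have "ln s \<in> {0..1}" using ln_2_less_1 by auto
    ultimately have "\<bar>ln (L (s * x)) - ln (L x)\<bar> \<le> ln \<theta>"
      using u0[of "ln x" "ln s"] s by (simp add: h_def exp_add mult.commute)
    then have "ln (L (s * x)) \<le> ln (\<theta> * L x)" "ln (L x) \<le> ln (\<theta> * L (s * x))"
      using \<open>0 < L x\<close> \<open>0 < L (s * x)\<close> \<open>1 < \<theta>\<close> by (simp_all add: ln_mult abs_le_iff)
    then show ?thesis using \<open>0 < L x\<close> \<open>0 < L (s * x)\<close> \<open>1 < \<theta>\<close> by simp
  qed
  moreover have "0 < x0" by (simp add: x0_def)
  ultimately show ?thesis by blast
qed

text \<open>Potter's bounds (Bingham, Goldie and Teugels, Regular Variation, Thm. 1.5.6).\<close>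
definition Potter_bounds :: "(real \<Rightarrow> real) \<Rightarrow> real \<Rightarrow> real \<Rightarrow> real \<Rightarrow> bool" where
  "Potter_bounds L \<eta> A x0 \<longleftrightarrow> 0 < x0 \<and> (\<forall>x\<ge>x0. 0 < L x) \<and>
     (\<forall>x y. x0 \<le> x \<longrightarrow> x \<le> y \<longrightarrow>
        L y \<le> A * (y / x) powr \<eta> * L x \<and> L x \<le> A * (y / x) powr \<eta> * L y)"

lemma ratio_bound_iterate:
  fixes L :: "real \<Rightarrow> real"
  assumes "1 \<le> \<theta>" "0 < x0"
    and ratio: "\<And>x s. x0 \<le> x \<Longrightarrow> s \<in> {1..2} \<Longrightarrow>
      0 < L x \<and> L (s * x) \<le> \<theta> * L x \<and> L x \<le> \<theta> * L (s * x)"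
    and "x0 \<le> x" "1 \<le> s" "s \<le> 2 ^ j"
  shows "L (s * x) \<le> \<theta> ^ j * L x \<and> L x \<le> \<theta> ^ j * L (s * x)"
  using assms(4-6)
proof (induction j arbitrary: s)
  case (Suc j)
  have pos: "0 < L y" if "x0 \<le> y" for y using ratio[OF that, of 1] by simp
  have grow: "x0 \<le> c * x" if "1 \<le> c" for c
    using that \<open>x0 \<le> x\<close> \<open>0 < x0\<close> mult_right_mono[of 1 c x] by (simp add: order_trans)
  show ?case
  proof (cases "s \<le> 2")
    case True
    have "\<theta> \<le> \<theta> ^ Suc j" using \<open>1 \<le> \<theta>\<close> by (simp add: power_increasing)
    then show ?thesis
      using ratio[of x s] Suc.prems True pos[of x] pos[of "s * x"] grow[of s]
      by (meson atLeastAtMost_iff mult_right_mono order_trans less_imp_le)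
  next
    case False
    then have "L (s * x) \<le> \<theta> * L (s / 2 * x) \<and> L (s / 2 * x) \<le> \<theta> * L (s * x)"
      using ratio[of "s / 2 * x" 2] grow[of "s / 2"] by simp
    moreover have "L (s / 2 * x) \<le> \<theta> ^ j * L x \<and> L x \<le> \<theta> ^ j * L (s / 2 * x)"
      using Suc.IH[of "s / 2"] Suc.prems False by simp
    ultimately show ?thesis using \<open>1 \<le> \<theta>\<close>
      by (auto intro: order_trans mult_left_mono simp: mult.assoc)
  qed
qed simp

lemma Potter_bounds_of_ratio_bound:
  fixes L :: "real \<Rightarrow> real"
  assumes "1 < \<theta>" "0 < x0"
    and ratio: "\<And>x s. x0 \<le> x \<Longrightarrow> s \<in> {1..2} \<Longrightarrow>
      0 < L x \<and> L (s * x) \<le> \<theta> * L x \<and> L x \<le> \<theta> * L (s * x)"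
  shows "Potter_bounds L (log 2 \<theta>) \<theta> x0"
proof -
  have pos: "0 < L x" if "x0 \<le> x" for x using ratio[OF that, of 1] by simp
  have "L y \<le> \<theta> * (y / x) powr log 2 \<theta> * L x \<and> L x \<le> \<theta> * (y / x) powr log 2 \<theta> * L y"
    if "x0 \<le> x" "x \<le> y" for x y
  proof -
    define s where "s = y / x"
    define j where "j = nat \<lceil>log 2 s\<rceil>"
    have "0 < x" "1 \<le> s" "y = s * x" using that \<open>0 < x0\<close> by (auto simp: s_def)
    have "s = 2 powr log 2 s" using \<open>1 \<le> s\<close> by simp
    also have "\<dots> \<le> 2 powr real j"
      unfolding j_def by (intro powr_mono real_nat_ceiling_ge) auto
    also have "\<dots> = 2 ^ j" by (simp add: powr_realpow)
    finally have "s \<le> 2 ^ j" .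
    have "\<theta> ^ j = \<theta> powr j" using \<open>1 < \<theta>\<close> by (simp add: powr_realpow)
    also have "\<dots> \<le> \<theta> powr (log 2 s + 1)"
      using \<open>1 < \<theta>\<close> \<open>1 \<le> s\<close> by (intro powr_mono) (auto simp: j_def)
    also have "\<dots> = \<theta> * \<theta> powr log 2 s" using \<open>1 < \<theta>\<close> by (simp add: powr_add)
    also have "\<theta> powr log 2 s = s powr log 2 \<theta>"
      using \<open>1 < \<theta>\<close> \<open>1 \<le> s\<close> by (simp add: powr_def log_def ac_simps)
    finally have "\<theta> ^ j \<le> \<theta> * s powr log 2 \<theta>" .
    moreover have "L y \<le> \<theta> ^ j * L x" "L x \<le> \<theta> ^ j * L y"
      using ratio_bound_iterate[OF less_imp_le[OF \<open>1 < \<theta>\<close>] \<open>0 < x0\<close> ratio \<open>x0 \<le> x\<close> \<open>1 \<le> s\<close> \<open>s \<le> 2 ^ j\<close>]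
        \<open>y = s * x\<close> by auto
    moreover have "0 < L x" "0 < L y" using pos that by auto
    ultimately show ?thesis unfolding s_def by (meson mult_right_mono order_trans less_imp_le)
  qed
  with pos \<open>0 < x0\<close> show ?thesis by (simp add: Potter_bounds_def)
qed

theorem slowly_varying_Potter_bounds:
  assumes "slowly_varying L" "0 < \<eta>"
  shows "\<exists>A x0. Potter_bounds L \<eta> A x0"
proof -
  have "1 < (2::real) powr \<eta>" using \<open>0 < \<eta>\<close> by simp
  from slowly_varying_ratio_bound[OF assms(1) this] obtain x0 where "0 < x0"
    and "\<And>x s. x0 \<le> x \<Longrightarrow> s \<in> {1..2} \<Longrightarrow>
      0 < L x \<and> L (s * x) \<le> 2 powr \<eta> * L x \<and> L x \<le> 2 powr \<eta> * L (s * x)"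
    by blast
  then have "Potter_bounds L (log 2 (2 powr \<eta>)) (2 powr \<eta>) x0"
    by (intro Potter_bounds_of_ratio_bound \<open>1 < 2 powr \<eta>\<close>) auto
  then show ?thesis by auto
qed

lemma
  assumes "Potter_bounds L \<eta> A x0"
  shows Potter_bounds_threshold_pos: "0 < x0"
    and Potter_bounds_pos: "x0 \<le> x \<Longrightarrow> 0 < L x"
    and Potter_bounds_upper: "x0 \<le> x \<Longrightarrow> x \<le> y \<Longrightarrow> L y \<le> A * (y / x) powr \<eta> * L x"
    and Potter_bounds_lower: "x0 \<le> x \<Longrightarrow> x \<le> y \<Longrightarrow> L x \<le> A * (y / x) powr \<eta> * L y"
  using assms by (auto simp: Potter_bounds_def)

lemma Potter_bounds_const_ge_1:
  assumes "Potter_bounds L \<eta> A x0"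
  shows "1 \<le> A"
proof -
  have "L x0 \<le> A * L x0" "0 < L x0"
    using Potter_bounds_upper[OF assms, of x0 x0] Potter_bounds_pos[OF assms, of x0]
      Potter_bounds_threshold_pos[OF assms] by auto
  then show ?thesis by simp
qed

lemma Potter_bounds_powr_le:
  assumes "Potter_bounds L \<eta> A x0" "x0 \<le> x"
  shows "L x \<le> A * L x0 * x0 powr (-\<eta>) * x powr \<eta>"
proof -
  have "0 < x0" using Potter_bounds_threshold_pos[OF assms(1)] .
  have "L x \<le> A * (x / x0) powr \<eta> * L x0" using Potter_bounds_upper[OF assms(1) order_refl assms(2)] .
  also have "\<dots> = A * L x0 * x0 powr (-\<eta>) * x powr \<eta>"
    using \<open>0 < x0\<close> assms(2) by (simp add: powr_divide powr_minus_divide)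
  finally show ?thesis .
qed

lemma Potter_bounds_powr_ge:
  assumes "Potter_bounds L \<eta> A x0" "x0 \<le> x"
  shows "L x0 * x0 powr \<eta> / A * x powr (-\<eta>) \<le> L x"
proof -
  have "0 < x0" "1 \<le> A"
    using Potter_bounds_threshold_pos[OF assms(1)] Potter_bounds_const_ge_1[OF assms(1)] .
  have "L x0 \<le> A * (x / x0) powr \<eta> * L x" using Potter_bounds_lower[OF assms(1) order_refl assms(2)] .
  then show ?thesis
    using \<open>0 < x0\<close> \<open>1 \<le> A\<close> assms(2)
    by (simp add: powr_divide powr_minus_divide field_simps)
qed

lemma slowly_varying_powr_tendsto_zero:
  assumes "slowly_varying L" "0 < \<beta>"
  shows "((\<lambda>x. L x * x powr (-\<beta>)) \<longlongrightarrow> 0) at_top"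
proof -
  obtain A x0 where P: "Potter_bounds L (\<beta> / 2) A x0"
    using slowly_varying_Potter_bounds[OF assms(1)] \<open>0 < \<beta>\<close> by (meson half_gt_zero)
  define c where "c = A * L x0 * x0 powr (-\<beta> / 2)"
  have "((\<lambda>x. x powr (-\<beta> / 2)) \<longlongrightarrow> 0) at_top"
    using \<open>0 < \<beta>\<close> by (intro tendsto_neg_powr filterlim_ident) simp
  then have lim: "((\<lambda>x. c * x powr (-\<beta> / 2)) \<longlongrightarrow> 0) at_top"
    by (rule tendsto_mult_right_zero)
  have bounds:  "\<forall>\<^sub>F x in at_top. 0 \<le> L x * x powr (-\<beta>) \<and> L x * x powr (-\<beta>) \<le> c * x powr (-\<beta> / 2)"
    using eventually_ge_at_top[of x0]
  proof eventually_elim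
    case (elim x)
    have "0 < x" using Potter_bounds_threshold_pos[OF P] elim by simp
    have "L x * x powr (-\<beta>) \<le> c * x powr (\<beta> / 2) * x powr (-\<beta>)"
      using mult_right_mono[OF Potter_bounds_powr_le[OF P elim], of "x powr (-\<beta>)"] by (simp add: c_def)
    also have "\<dots> = c * x powr (-\<beta> / 2)"
      using \<open>0 < x\<close> by (simp add: mult.assoc powr_add[symmetric])
    finally show ?case using Potter_bounds_pos[OF P elim] by simp
  qed
  show ?thesis
    by (rule tendsto_sandwich[OF _ _ tendsto_const lim]; rule eventually_mono[OF bounds]) simp_all
qed

lemma Potter_bounds_powr_mult_ge:
  assumes P: "Potter_bounds L \<eta> A x0" and "\<eta> \<le> \<beta>" "x0 \<le> x" "1 \<le> x"
  shows "L x0 * x0 powr \<eta> / A \<le> L x * x powr \<beta>"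
proof -
  have "L x0 * x0 powr \<eta> / A * 1 \<le> L x0 * x0 powr \<eta> / A * x powr (\<beta> - \<eta>)"
    using Potter_bounds_pos[OF P order_refl] Potter_bounds_const_ge_1[OF P] assms(2,4)
    by (intro mult_left_mono) (auto simp: ge_one_powr_ge_zero)
  also have "\<dots> = L x0 * x0 powr \<eta> / A * x powr (-\<eta>) * x powr \<beta>"
    using \<open>1 \<le> x\<close> by (simp add: powr_diff powr_minus_divide)
  also have "\<dots> \<le> L x * x powr \<beta>"
    using Potter_bounds_powr_ge[OF P \<open>x0 \<le> x\<close>] by (intro mult_right_mono) auto
  finally show ?thesis by simp
qed

lemma Potter_bounds_comparable:
  assumes P: "Potter_bounds L \<eta> A x0" and "0 \<le> \<eta>" "x0 \<le> x" "x0 \<le> y" "y \<le> c * x" "x \<le> c * y"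
  shows "L y \<le> A * c powr \<eta> * L x"
proof -
  have "0 < x" "0 < y" "0 < L x"
    using Potter_bounds_threshold_pos[OF P] Potter_bounds_pos[OF P] assms(3,4) by auto
  show ?thesis
  proof (cases "x \<le> y")
    case True
    have "(y / x) powr \<eta> \<le> c powr \<eta>"
      using assms(5) \<open>0 < x\<close> True \<open>0 \<le> \<eta>\<close> by (intro powr_mono2) (auto simp: field_simps)
    then have "A * (y / x) powr \<eta> * L x \<le> A * c powr \<eta> * L x"
      using Potter_bounds_const_ge_1[OF P] \<open>0 < L x\<close> by (intro mult_right_mono mult_left_mono) auto
    with Potter_bounds_upper[OF P \<open>x0 \<le> x\<close> True] show ?thesis by linarith
  next
    case False
    have "(x / y) powr \<eta> \<le> c powr \<eta>"
      using assms(6) \<open>0 < y\<close> False \<open>0 \<le> \<eta>\<close> by (intro powr_mono2) (auto simp: field_simps)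
    then have "A * (x / y) powr \<eta> * L x \<le> A * c powr \<eta> * L x"
      using Potter_bounds_const_ge_1[OF P] \<open>0 < L x\<close> by (intro mult_right_mono mult_left_mono) auto
    with Potter_bounds_lower[OF P \<open>x0 \<le> y\<close>, of x] False show ?thesis by linarith
  qed
qed

lemma eventually_ratio_bounds:
  fixes M :: "nat \<Rightarrow> nat"
  assumes "(\<lambda>N. real (M N) / real N) \<longlonglongrightarrow> \<gamma>" "0 < \<gamma>"
  shows "\<forall>\<^sub>F N in sequentially. \<gamma> / 2 * real N \<le> real (M N) \<and> real (M N) \<le> 2 * \<gamma> * real N"
proof -
  have lt: "\<gamma> / 2 < \<gamma>" "\<gamma> < 2 * \<gamma>" using \<open>0 < \<gamma>\<close> by auto
  have "\<forall>\<^sub>F N in sequentially. \<gamma> / 2 < real (M N) / real N \<and> real (M N) / real N < 2 * \<gamma> \<and> 1 \<le> N"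
    using order_tendstoD(1)[OF assms(1) lt(1)] order_tendstoD(2)[OF assms(1) lt(2)]
      eventually_ge_at_top[of 1]
    by eventually_elim auto
  then show ?thesis
    by eventually_elim (auto simp: field_simps)
qed

lemma filterlim_at_top_of_ratio:
  fixes M :: "nat \<Rightarrow> nat"
  assumes "(\<lambda>N. real (M N) / real N) \<longlonglongrightarrow> \<gamma>" "0 < \<gamma>"
  shows "filterlim (\<lambda>N. real (M N)) at_top sequentially"
proof (rule filterlim_at_top_mono)
  show "filterlim (\<lambda>N. \<gamma> / 2 * real N) at_top sequentially"
    using \<open>0 < \<gamma>\<close> by (intro filterlim_tendsto_pos_mult_at_top[OF tendsto_const _ filterlim_real_sequentially]) simp
  show "\<forall>\<^sub>F N in sequentially. \<gamma> / 2 * real N \<le> real (M N)"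
    using eventually_ratio_bounds[OF assms] by eventually_elim simp
qed

lemma Potter_bounds_powr_comparable:
  assumes P: "Potter_bounds L \<eta> A x0" and "0 \<le> \<eta>" "0 \<le> \<alpha>" "0 < \<gamma>" "x0 \<le> x" "x0 \<le> y"
    and "\<gamma> / 2 * x \<le> y" "y \<le> 2 * \<gamma> * x"
  shows "L y * y powr (-\<alpha>) \<le> A * max (2 * \<gamma>) (2 / \<gamma>) powr \<eta> * (\<gamma> / 2) powr (-\<alpha>) * (L x * x powr (-\<alpha>))"
proof -
  define c where "c = max (2 * \<gamma>) (2 / \<gamma>)"
  have "0 < x" using Potter_bounds_threshold_pos[OF P] \<open>x0 \<le> x\<close> by simp
  have "2 * \<gamma> * x \<le> c * x" "2 / \<gamma> * y \<le> c * y"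
    using \<open>0 < x\<close> \<open>x0 \<le> y\<close> Potter_bounds_threshold_pos[OF P] by (intro mult_right_mono; simp add: c_def)+
  moreover have "x \<le> 2 / \<gamma> * y" using assms(7) \<open>0 < \<gamma>\<close> by (simp add: field_simps)
  ultimately have "y \<le> c * x" "x \<le> c * y" using assms(8) by linarith+
  then have "L y \<le> A * c powr \<eta> * L x"
    by (rule Potter_bounds_comparable[OF P \<open>0 \<le> \<eta>\<close> \<open>x0 \<le> x\<close> \<open>x0 \<le> y\<close>])
  moreover have "y powr (-\<alpha>) \<le> (\<gamma> / 2) powr (-\<alpha>) * x powr (-\<alpha>)"
    using assms(7) \<open>0 < \<gamma>\<close> \<open>0 < x\<close> \<open>0 \<le> \<alpha>\<close>
    by (subst powr_mult[symmetric]) (auto intro!: powr_mono2')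
  moreover have "0 \<le> A * c powr \<eta> * L x"
    using Potter_bounds_pos[OF P \<open>x0 \<le> x\<close>] Potter_bounds_const_ge_1[OF P] by simp
  ultimately have "L y * y powr (-\<alpha>) \<le> A * c powr \<eta> * L x * ((\<gamma> / 2) powr (-\<alpha>) * x powr (-\<alpha>))"
    by (intro mult_mono) auto
  then show ?thesis by (simp add: c_def mult_ac)
qed

lemma slowly_varying_powr_comparable:
  assumes "slowly_varying L" "0 \<le> \<alpha>" "0 < \<gamma>"
  obtains \<rho> where "0 < \<rho>"
    "\<And>M :: nat \<Rightarrow> nat. (\<lambda>N. real (M N) / real N) \<longlonglongrightarrow> \<gamma> \<Longrightarrow>
       \<forall>\<^sub>F N in sequentially. L (M N) * real (M N) powr (-\<alpha>) \<le> \<rho> * (L N * real N powr (-\<alpha>))"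
proof -
  obtain A x0 where P: "Potter_bounds L 1 A x0"
    using slowly_varying_Potter_bounds[OF assms(1)] by fastforce
  define \<rho> where "\<rho> = A * max (2 * \<gamma>) (2 / \<gamma>) powr 1 * (\<gamma> / 2) powr (-\<alpha>)"
  have "0 < \<rho>" using \<open>0 < \<gamma>\<close> Potter_bounds_const_ge_1[OF P] by (simp add: \<rho>_def)
  moreover have "\<forall>\<^sub>F N in sequentially. L (M N) * real (M N) powr (-\<alpha>) \<le> \<rho> * (L N * real N powr (-\<alpha>))"
    if lim: "(\<lambda>N. real (M N) / real N) \<longlonglongrightarrow> \<gamma>" for M :: "nat \<Rightarrow> nat"
    using eventually_ratio_bounds[OF lim \<open>0 < \<gamma>\<close>] eventually_ge_at_top[of "nat \<lceil>x0\<rceil>"]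
      filterlim_at_top[THEN iffD1, OF filterlim_at_top_of_ratio[OF lim \<open>0 < \<gamma>\<close>], rule_format, of x0]
  proof eventually_elim
    case (elim N)
    then have "x0 \<le> real N" by linarith
    with elim show ?case
      unfolding \<rho>_def by (intro Potter_bounds_powr_comparable[OF P]) (use assms in auto)
  qed
  ultimately show ?thesis using that by blast
qed

section \<open>Sums of regularly varying sequences\<close>

lemma suminf_ennreal_le_telescope:
  fixes d a :: "nat \<Rightarrow> real"
  assumes "\<And>m. 0 \<le> d m" "\<And>m. d m \<le> a m - a (Suc m)" "\<And>m. 0 \<le> a m"
  shows "(\<Sum>m. ennreal (d m)) \<le> ennreal (a 0)"
proof -
  have "(\<Sum>m<M. ennreal (d m)) \<le> ennreal (a 0)" for M
  proof -
    have "(\<Sum>m<M. d m) \<le> (\<Sum>m<M. a m - a (Suc m))" by (intro sum_mono assms)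
    also have "\<dots> = a 0 - a M" by (rule sum_lessThan_telescope')
    also have "\<dots> \<le> a 0" using assms(3)[of M] by simp
    finally show ?thesis using assms(1) by (simp add: ennreal_leI)
  qed
  then show ?thesis unfolding suminf_eq_SUP by (intro SUP_least) auto
qed

lemma powr_le_difference_quotient:
  fixes x s :: real
  assumes "0 < x" "s < 1" "s \<noteq> 0"
  shows "(x + 1) powr (s - 1) \<le> ((x + 1) powr s - x powr s) / s"
proof -
  have deriv: "((\<lambda>y. y powr s / s) has_real_derivative y powr (s - 1)) (at y)" if "x \<le> y" for y
  proof -
    have "0 < y" using assms that by simp
    from has_real_derivative_powr[OF this, of s] show ?thesis
      using assms by (auto intro: DERIV_cdivide[THEN DERIV_cong])
  qed
  then obtain z where z: "x < z" "z < x + 1"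
    and eq: "(x + 1) powr s / s - x powr s / s = (x + 1 - x) * z powr (s - 1)"
    using MVT2[of x "x + 1" "\<lambda>y. y powr s / s" "\<lambda>y. y powr (s - 1)"] deriv by auto
  have "(x + 1) powr (s - 1) \<le> z powr (s - 1)"
    using z assms by (intro powr_mono2') auto
  also have "\<dots> = ((x + 1) powr s - x powr s) / s" using eq by (simp add: diff_divide_distrib)
  finally show ?thesis .
qed

lemma sum_powr_le:
  fixes \<beta> :: real
  assumes "0 < \<beta>" "\<beta> < 1"
  shows "(\<Sum>j=1..t. real j powr (-\<beta>)) \<le> real t powr (1 - \<beta>) / (1 - \<beta>)"
proof (induction t)
  case (Suc t)
  show ?case
  proof (cases "t = 0")
    case False
    have "(\<Sum>j=1..Suc t. real j powr (-\<beta>)) = (\<Sum>j=1..t. real j powr (-\<beta>)) + (real t + 1) powr (-\<beta>)"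
      by (simp add: add.commute)
    also have "\<dots> \<le> real t powr (1-\<beta>) / (1-\<beta>) + ((real t + 1) powr (1-\<beta>) - real t powr (1-\<beta>)) / (1-\<beta>)"
      using Suc.IH powr_le_difference_quotient[of "real t" "1 - \<beta>"] assms False
      by (intro add_mono) auto
    finally show ?thesis by (simp add: diff_divide_distrib add.commute)
  qed (use assms in simp)
qed simp

lemma Potter_tail_sum_le:
  assumes P: "Potter_bounds L \<eta> A x0" and "\<eta> < \<beta>" "x0 \<le> real n"
  shows "(\<Sum>m. ennreal (L (real (m + n + 1)) * real (m + n + 1) powr (-1 - \<beta>)))
    \<le> ennreal (A * L n * real n powr (-\<beta>) / (\<beta> - \<eta>))"
proof -
  define c where "c = A * L n * real n powr (-\<eta>)"
  define a where "a m = c * real (m + n) powr (\<eta> - \<beta>) / (\<beta> - \<eta>)" for m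
  have "0 < real n" using Potter_bounds_threshold_pos[OF P] \<open>x0 \<le> real n\<close> by simp
  have "0 \<le> c" using Potter_bounds_const_ge_1[OF P] Potter_bounds_pos[OF P \<open>x0 \<le> real n\<close>]
    by (simp add: c_def)
  have flip: "(p - q) / (\<eta> - \<beta>) = (q - p) / (\<beta> - \<eta>)" for p q :: real
    by (metis minus_diff_eq minus_divide_divide)
  have "(\<Sum>m. ennreal (L (real (m + n + 1)) * real (m + n + 1) powr (-1 - \<beta>))) \<le> ennreal (a 0)"
  proof (rule suminf_ennreal_le_telescope)
    fix m
    have "x0 \<le> real (m + n + 1)" using \<open>x0 \<le> real n\<close> by simp
    then show "0 \<le> L (real (m + n + 1)) * real (m + n + 1) powr (-1 - \<beta>)"
      using Potter_bounds_pos[OF P] by (simp add: less_imp_le)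
    show "0 \<le> a m" using \<open>0 \<le> c\<close> \<open>\<eta> < \<beta>\<close> by (simp add: a_def)
    have "L (real (m + n + 1)) * real (m + n + 1) powr (-1 - \<beta>)
        \<le> A * (real (m + n + 1) / real n) powr \<eta> * L n * real (m + n + 1) powr (-1 - \<beta>)"
      using Potter_bounds_upper[OF P \<open>x0 \<le> real n\<close>, of "real (m + n + 1)"] by (intro mult_right_mono) auto
    also have "\<dots> = c * (real (m + n) + 1) powr ((\<eta> - \<beta>) - 1)"
      using \<open>0 < real n\<close> by (simp add: c_def powr_divide powr_minus_divide powr_add[symmetric] field_simps)
    also have "\<dots> \<le> c * (((real (m + n) + 1) powr (\<eta> - \<beta>) - real (m + n) powr (\<eta> - \<beta>)) / (\<eta> - \<beta>))"
      using \<open>0 < real n\<close> \<open>\<eta> < \<beta>\<close> \<open>0 \<le> c\<close>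
      by (intro mult_left_mono powr_le_difference_quotient) auto
    also have "\<dots> = c * (real (m + n) powr (\<eta> - \<beta>) - (real (m + n) + 1) powr (\<eta> - \<beta>)) / (\<beta> - \<eta>)"
      by (simp only: flip times_divide_eq_right)
    also have "\<dots> = a m - a (Suc m)" by (simp add: a_def diff_divide_distrib right_diff_distrib add_ac)
    finally show "L (real (m + n + 1)) * real (m + n + 1) powr (-1 - \<beta>) \<le> a m - a (Suc m)" .
  qed
  also have "a 0 = A * L n * real n powr (-\<beta>) / (\<beta> - \<eta>)"
    using \<open>0 < real n\<close> by (simp add: a_def c_def powr_add[symmetric])
  finally show ?thesis .
qed

lemma Potter_partial_sum_le:
  assumes P: "Potter_bounds L \<eta> A x0" and "0 < \<alpha> + \<eta>" "\<alpha> + \<eta> < 1" "x0 \<le> real n0" "n0 \<le> t"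
  shows "(\<Sum>n=n0..t. L n * real n powr (-\<alpha>)) \<le> A * L t * real t powr (1 - \<alpha>) / (1 - \<alpha> - \<eta>)"
proof -
  have "0 < real n0" using Potter_bounds_threshold_pos[OF P] \<open>x0 \<le> real n0\<close> by simp
  have "x0 \<le> real t" using \<open>x0 \<le> real n0\<close> \<open>n0 \<le> t\<close> by linarith
  define c where "c = A * L t * real t powr \<eta>"
  have "0 \<le> c" using Potter_bounds_const_ge_1[OF P] Potter_bounds_pos[OF P \<open>x0 \<le> real t\<close>]
    by (simp add: c_def)
  have "(\<Sum>n=n0..t. L n * real n powr (-\<alpha>)) \<le> (\<Sum>n=n0..t. c * real n powr (-(\<alpha> + \<eta>)))"
  proof (rule sum_mono)
    fix n assume n: "n \<in> {n0..t}"
    then have "x0 \<le> real n" "0 < real n" using \<open>x0 \<le> real n0\<close> \<open>0 < real n0\<close> by auto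
    have "L n * real n powr (-\<alpha>) \<le> A * (real t / real n) powr \<eta> * L t * real n powr (-\<alpha>)"
      using Potter_bounds_lower[OF P \<open>x0 \<le> real n\<close>, of t] n by (intro mult_right_mono) auto
    also have "\<dots> = c * real n powr (-(\<alpha> + \<eta>))"
    proof -
      have "real n powr (-(\<alpha> + \<eta>)) = real n powr (-\<alpha>) / real n powr \<eta>"
        by (simp add: powr_diff)
      then show ?thesis using \<open>0 < real n\<close> by (simp add: c_def powr_divide)
    qed
    finally show "L n * real n powr (-\<alpha>) \<le> c * real n powr (-(\<alpha> + \<eta>))" .
  qed
  also have "\<dots> \<le> c * (\<Sum>n=1..t. real n powr (-(\<alpha> + \<eta>)))"
    using \<open>0 < real n0\<close> \<open>0 \<le> c\<close> by (auto simp: sum_distrib_left intro!: sum_mono2)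
  also have "\<dots> \<le> c * (real t powr (1 - (\<alpha> + \<eta>)) / (1 - (\<alpha> + \<eta>)))"
    using assms \<open>0 \<le> c\<close> by (intro mult_left_mono sum_powr_le) auto
  also have "\<dots> = A * L t * real t powr (1 - \<alpha>) / (1 - \<alpha> - \<eta>)"
    using \<open>0 < real n0\<close> \<open>n0 \<le> t\<close> by (simp add: c_def powr_add[symmetric] diff_diff_eq)
  finally show ?thesis .
qed

section \<open>Truncated partial sums of i.i.d. sequences\<close>

lemma (in prob_space) nn_integral_stream_space_snth:
  assumes [measurable]: "g \<in> borel_measurable M"
  shows "(\<integral>\<^sup>+\<omega>. g (\<omega> !! i) \<partial>stream_space M) = (\<integral>\<^sup>+x. g x \<partial>M)"
proof (induction i)
  case 0
  then show ?case
    using prob_space.emeasure_space_1[OF prob_space_stream_space]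
    by (subst nn_integral_stream_space) simp_all
next
  case (Suc i)
  then show ?case
    by (subst nn_integral_stream_space) (simp_all add: emeasure_space_1)
qed

lemma (in prob_space) emeasure_stream_trunc_sum_ge:
  fixes h :: "'a \<Rightarrow> nat"
  assumes [measurable]: "h \<in> measurable M (count_space UNIV)" and "0 < t"
  shows "emeasure (stream_space M) {\<omega>\<in>space (stream_space M). t \<le> (\<Sum>i<k. min (h (\<omega> !! i)) t)}
    \<le> ennreal (real k / real t) * (\<integral>\<^sup>+x. ennreal (real (min (h x) t)) \<partial>M)"
proof -
  define u where "u \<omega> = ennreal (real (\<Sum>i<k. min (h (\<omega> !! i)) t))" for \<omega>
  have [measurable]: "u \<in> borel_measurable (stream_space M)" unfolding u_def by measurable
  have "t \<le> (\<Sum>i<k. min (h (\<omega> !! i)) t) \<longleftrightarrow> 1 \<le> ennreal (1 / real t) * u \<omega>" for \<omega>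
  proof -
    have "ennreal (1 / real t) * u \<omega> = ennreal (real (\<Sum>i<k. min (h (\<omega> !! i)) t) / real t)"
      by (simp add: u_def ennreal_mult[symmetric] del: of_nat_sum)
    then show ?thesis
      using \<open>0 < t\<close> by (simp add: ennreal_1[symmetric] del: ennreal_1 of_nat_sum)
  qed
  then have "{\<omega>\<in>space (stream_space M). t \<le> (\<Sum>i<k. min (h (\<omega> !! i)) t)}
      = {\<omega>\<in>space (stream_space M). 1 \<le> ennreal (1 / real t) * u \<omega>}"
    by blast
  also have "emeasure (stream_space M) \<dots>
      \<le> ennreal (1 / real t) * (\<integral>\<^sup>+\<omega>. u \<omega> * indicator (space (stream_space M)) \<omega> \<partial>stream_space M)"
    by (rule nn_integral_Markov_inequality) auto
  also have "(\<integral>\<^sup>+\<omega>. u \<omega> * indicator (space (stream_space M)) \<omega> \<partial>stream_space M)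
      = (\<integral>\<^sup>+\<omega>. u \<omega> \<partial>stream_space M)"
    by (intro nn_integral_cong) simp
  also have "(\<integral>\<^sup>+\<omega>. u \<omega> \<partial>stream_space M)
      = (\<integral>\<^sup>+\<omega>. (\<Sum>i<k. ennreal (real (min (h (\<omega> !! i)) t))) \<partial>stream_space M)"
    by (simp add: u_def sum_ennreal[symmetric] del: sum_ennreal)
  also have "\<dots> = (\<Sum>i<k. \<integral>\<^sup>+\<omega>. ennreal (real (min (h (\<omega> !! i)) t)) \<partial>stream_space M)"
    by (rule nn_integral_sum) measurable
  also have "\<dots> = (\<Sum>i<k. \<integral>\<^sup>+x. ennreal (real (min (h x) t)) \<partial>M)"
    by (intro sum.cong refl nn_integral_stream_space_snth) measurable
  also have "\<dots> = ennreal (real k) * (\<integral>\<^sup>+x. ennreal (real (min (h x) t)) \<partial>M)"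
    by (simp add: ennreal_of_nat_eq_real_of_nat)
  also have "ennreal (1 / real t) * (ennreal (real k) * (\<integral>\<^sup>+x. ennreal (real (min (h x) t)) \<partial>M))
      = ennreal (real k / real t) * (\<integral>\<^sup>+x. ennreal (real (min (h x) t)) \<partial>M)"
    by (simp add: ennreal_mult'[symmetric] mult.assoc[symmetric])
  finally show ?thesis .
qed

lemma sum_le_of_sum_min_less:
  fixes a :: "nat \<Rightarrow> nat"
  assumes "(\<Sum>i<k. min (a i) N) < N"
  shows "(\<Sum>i<k. a i) \<le> N"
proof -
  have "a i < N" if "i < k" for i
  proof (rule ccontr)
    assume "\<not> a i < N"
    then have "N \<le> (\<Sum>i<k. min (a i) N)"
      using member_le_sum[of i "{..<k}" "\<lambda>i. min (a i) N"] that by simp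
    with assms show False by simp
  qed
  then have "(\<Sum>i<k. a i) = (\<Sum>i<k. min (a i) N)" by (intro sum.cong) auto
  with assms show ?thesis by simp
qed

section \<open>The bivariate renewal process\<close>

definition box_count :: "(nat \<times> nat) stream \<Rightarrow> nat \<Rightarrow> nat \<Rightarrow> nat" where
  "box_count \<omega> N M = card (renewal_set \<omega> \<inter> ({1..N} \<times> {1..M}))"

lemma box_count_ge:
  assumes pos: "\<And>i. i < k \<Longrightarrow> 1 \<le> fst (\<omega> !! i) \<and> 1 \<le> snd (\<omega> !! i)"
    and "(\<Sum>i<k. fst (\<omega> !! i)) \<le> N" "(\<Sum>i<k. snd (\<omega> !! i)) \<le> M"
  shows "k \<le> box_count \<omega> N M"
proof -
  define F where "F j = (\<Sum>i<j. fst (\<omega> !! i))" for j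
  define G where "G j = (\<Sum>i<j. snd (\<omega> !! i))" for j
  have F_step: "F j + (j' - j) \<le> F j'" "G j + (j' - j) \<le> G j'" if "j \<le> j'" "j' \<le> k" for j j'
  proof -
    have "{..<j'} = {..<j} \<union> {j..<j'}" "{..<j} \<inter> {j..<j'} = {}" using that by auto
    moreover have "j' - j \<le> (\<Sum>i\<in>{j..<j'}. fst (\<omega> !! i))" "j' - j \<le> (\<Sum>i\<in>{j..<j'}. snd (\<omega> !! i))"
      using sum_mono[of "{j..<j'}" "\<lambda>_. 1::nat"] pos that by auto
    ultimately show "F j + (j' - j) \<le> F j'" "G j + (j' - j) \<le> G j'"
      unfolding F_def G_def by (simp_all add: sum.union_disjoint)
  qed
  have box: "renewal_pt \<omega> ` {1..k} \<subseteq> renewal_set \<omega> \<inter> ({1..N} \<times> {1..M})"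
  proof
    fix q assume "q \<in> renewal_pt \<omega> ` {1..k}"
    then obtain j where "j \<in> {1..k}" "q = (F j, G j)"
      by (auto simp: renewal_pt_def F_def G_def)
    moreover have "j \<le> F j" "j \<le> G j" "F j \<le> F k" "G j \<le> G k"
      using F_step[of 0 j] F_step[of j k] \<open>j \<in> {1..k}\<close> by (auto simp: F_def G_def)
    ultimately show "q \<in> renewal_set \<omega> \<inter> ({1..N} \<times> {1..M})"
      using assms(2,3) by (auto simp: renewal_set_def renewal_pt_def F_def G_def)
  qed
  have "inj_on (renewal_pt \<omega>) {1..k}"
  proof (rule inj_onI)
    fix j j' assume "j \<in> {1..k}" "j' \<in> {1..k}" "renewal_pt \<omega> j = renewal_pt \<omega> j'"
    then have "F j = F j'" "j \<le> k" "j' \<le> k" by (auto simp: renewal_pt_def F_def)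
    show "j = j'"
    proof (rule ccontr)
      assume "j \<noteq> j'"
      then consider "j < j'" | "j' < j" by linarith
      then show False
        using F_step(1)[of j j'] F_step(1)[of j' j] \<open>F j = F j'\<close> \<open>j \<le> k\<close> \<open>j' \<le> k\<close>
        by cases auto
    qed
  qed
  then have "k = card (renewal_pt \<omega> ` {1..k})" by (simp add: card_image)
  also have "\<dots> \<le> box_count \<omega> N M"
    unfolding box_count_def by (rule card_mono[OF _ box]) simp
  finally show ?thesis .
qed

locale bivariate_renewal =
  fixes L :: "real \<Rightarrow> real" and \<alpha> :: real
  assumes slowly_varying: "slowly_varying L"
    and L_pos: "\<forall>n::nat. n \<ge> 2 \<longrightarrow> L (real n) > 0"
    and K_has_sum: "((\<lambda>(n, m). Kfun \<alpha> L (n + m)) has_sum 1) ({1..} \<times> {1..})"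
    and \<alpha>_pos: "0 < \<alpha>" and \<alpha>_less_1: "\<alpha> < 1"
begin

definition incr_mass :: "nat \<times> nat \<Rightarrow> real" where
  "incr_mass = (\<lambda>(n, m). if 1 \<le> n \<and> 1 \<le> m then Kfun \<alpha> L (n + m) else 0)"

lemma Kfun_nonneg: "2 \<le> j \<Longrightarrow> 0 \<le> Kfun \<alpha> L j"
  using L_pos by (auto simp: Kfun_def intro!: less_imp_le)

lemma incr_mass_nonneg: "0 \<le> incr_mass x"
  by (cases x) (auto simp: incr_mass_def intro!: Kfun_nonneg)

lemma nn_integral_incr_mass: "(\<integral>\<^sup>+x. ennreal (incr_mass x) \<partial>count_space UNIV) = 1"
proof -
  define S where "S = ({1..} \<times> {1..} :: (nat \<times> nat) set)"
  define g where "g = (\<lambda>(n::nat, m::nat). Kfun \<alpha> L (n + m))"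
  have g_nonneg: "x \<in> S \<Longrightarrow> 0 \<le> g x" for x by (cases x) (auto simp: S_def g_def intro!: Kfun_nonneg)
  have "(g has_sum 1) S" using K_has_sum by (simp add: S_def g_def)
  then have "g summable_on S" by (rule has_sum_imp_summable)
  then have "Infinite_Sum.abs_summable_on g S"
    using g_nonneg by (subst (asm) summable_on_iff_abs_summable_on_real) auto
  then have summable: "Infinite_Set_Sum.abs_summable_on g S" using abs_summable_equivalent by blast
  have "infsetsum g S = 1"
    using infsetsum_infsum[OF summable] infsumI[OF \<open>(g has_sum 1) S\<close>] by simp
  then have "(\<integral>\<^sup>+x. ennreal (g x) \<partial>count_space S) = 1"
    using nn_integral_conv_infsetsum[OF summable g_nonneg] by simp
  also have "(\<integral>\<^sup>+x. ennreal (g x) \<partial>count_space S) = (\<integral>\<^sup>+x. ennreal (incr_mass x) \<partial>count_space UNIV)"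
    by (subst nn_integral_count_space_indicator)
      (auto intro!: nn_integral_cong simp: incr_mass_def g_def S_def split: split_indicator)
  finally show ?thesis .
qed

lemma pmf_renewal_incr: "pmf (renewal_incr \<alpha> L) x = incr_mass x"
  unfolding renewal_incr_def incr_mass_def[symmetric]
  using incr_mass_nonneg nn_integral_incr_mass by (intro pmf_embed_pmf) auto

lemma AE_renewal_incr_pos: "AE x in renewal_incr \<alpha> L. 1 \<le> fst x \<and> 1 \<le> snd x"
  by (auto simp: AE_measure_pmf_iff set_pmf_iff pmf_renewal_incr incr_mass_def split: if_splits)

lemma renewal_incr_swap: "map_pmf prod.swap (renewal_incr \<alpha> L) = renewal_incr \<alpha> L"
proof (rule pmf_eqI)
  fix x :: "nat \<times> nat"
  have "pmf (map_pmf prod.swap (renewal_incr \<alpha> L)) (prod.swap (prod.swap x)) = pmf (renewal_incr \<alpha> L) (prod.swap x)"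
    by (rule pmf_map_inj') (simp add: inj_on_def)
  then show "pmf (map_pmf prod.swap (renewal_incr \<alpha> L)) x = pmf (renewal_incr \<alpha> L) x"
    by (cases x) (simp add: pmf_renewal_incr incr_mass_def add.commute conj_commute)
qed

lemma nn_integral_renewal_incr_snd:
  "(\<integral>\<^sup>+x. g (snd x) \<partial>renewal_incr \<alpha> L) = (\<integral>\<^sup>+x. g (fst x) \<partial>renewal_incr \<alpha> L)"
proof -
  have "(\<integral>\<^sup>+x. g (fst x) \<partial>renewal_incr \<alpha> L) = (\<integral>\<^sup>+x. g (fst x) \<partial>map_pmf prod.swap (renewal_incr \<alpha> L))"
    by (simp only: renewal_incr_swap)
  also have "\<dots> = (\<integral>\<^sup>+x. g (snd x) \<partial>renewal_incr \<alpha> L)"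
    by (simp add: map_pmf_rep_eq nn_integral_distr)
  finally show ?thesis ..
qed

definition fst_marginal :: "nat \<Rightarrow> ennreal" where
  "fst_marginal a = (\<Sum>b. ennreal (incr_mass (a, b)))"

lemma nn_integral_renewal_incr_fst:
  "(\<integral>\<^sup>+x. g (fst x) \<partial>renewal_incr \<alpha> L) = (\<Sum>a. g a * fst_marginal a)"
proof -
  have "(\<integral>\<^sup>+x. g (fst x) \<partial>renewal_incr \<alpha> L) = (\<integral>\<^sup>+x. ennreal (incr_mass x) * g (fst x) \<partial>count_space UNIV)"
    by (simp add: nn_integral_measure_pmf pmf_renewal_incr)
  also have "\<dots> = (\<integral>\<^sup>+a. \<integral>\<^sup>+b. ennreal (incr_mass (a, b)) * g a \<partial>count_space UNIV \<partial>count_space UNIV)"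
    by (subst nn_integral_fst_count_space[symmetric]) simp
  also have "\<dots> = (\<Sum>a. g a * fst_marginal a)"
    by (simp add: nn_integral_count_space_nat fst_marginal_def mult.commute[of _ "g _"])
  finally show ?thesis .
qed

lemma fst_marginal_le_1: "fst_marginal a \<le> 1"
proof -
  have "(\<Sum>a. fst_marginal a) = 1"
    using nn_integral_renewal_incr_fst[of "\<lambda>_. 1"] by simp
  then show ?thesis using sum_le_suminf[OF summableI, of "{a}" fst_marginal] by simp
qed

lemma fst_marginal_le_Potter:
  assumes P: "Potter_bounds L \<eta> A x0" and "\<eta> < 1 + \<alpha>" "x0 \<le> real a"
  shows "fst_marginal a \<le> ennreal (A / (1 + \<alpha> - \<eta>) * (L a * real a powr (-1 - \<alpha>)))"
proof -
  have "1 \<le> a" using Potter_bounds_threshold_pos[OF P] \<open>x0 \<le> real a\<close> by simp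
  have "fst_marginal a = (\<Sum>m. ennreal (incr_mass (a, m + 1))) + (\<Sum>j<1. ennreal (incr_mass (a, j)))"
    unfolding fst_marginal_def by (rule suminf_offset) simp
  also have "\<dots> = (\<Sum>m. ennreal (L (real (m + a + 1)) * real (m + a + 1) powr (-1 - (1 + \<alpha>))))"
    using \<open>1 \<le> a\<close> by (simp add: incr_mass_def Kfun_def add_ac)
  also have "\<dots> \<le> ennreal (A * L a * real a powr (-(1 + \<alpha>)) / (1 + \<alpha> - \<eta>))"
    by (rule Potter_tail_sum_le[OF P \<open>\<eta> < 1 + \<alpha>\<close> \<open>x0 \<le> real a\<close>])
  finally show ?thesis by (simp add: mult.assoc)
qed

definition trunc_mean :: "nat \<Rightarrow> ennreal" where
  "trunc_mean t = (\<integral>\<^sup>+x. ennreal (real (min (fst x) t)) \<partial>renewal_incr \<alpha> L)"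

lemma sum_moment_fst_marginal_le_Potter:
  assumes P: "Potter_bounds L \<eta> A x0" and "0 < \<eta>" "\<alpha> + \<eta> < 1" "x0 \<le> real n0" "n0 \<le> t"
  shows "(\<Sum>a=n0..t. ennreal (real a) * fst_marginal a)
    \<le> ennreal (A / (1 + \<alpha> - \<eta>) * A * L t * real t powr (1 - \<alpha>) / (1 - \<alpha> - \<eta>))"
proof -
  define D where "D = A / (1 + \<alpha> - \<eta>)"
  have "0 < D" using Potter_bounds_const_ge_1[OF P] \<open>\<alpha> + \<eta> < 1\<close> \<alpha>_pos by (simp add: D_def)
  have "ennreal (real a) * fst_marginal a \<le> ennreal (D * (L a * real a powr (-\<alpha>)))"
    if "a \<in> {n0..t}" for a
  proof -
    have "x0 \<le> real a" "0 < real a" "0 < L a"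
      using that \<open>x0 \<le> real n0\<close> Potter_bounds_threshold_pos[OF P] Potter_bounds_pos[OF P] by auto
    have "ennreal (real a) * fst_marginal a \<le> ennreal (real a) * ennreal (D * (L a * real a powr (-1 - \<alpha>)))"
      using fst_marginal_le_Potter[OF P _ \<open>x0 \<le> real a\<close>] \<open>\<alpha> + \<eta> < 1\<close> \<alpha>_pos
      by (intro mult_left_mono) (auto simp: D_def)
    also have "\<dots> = ennreal (D * (L a * real a powr (-\<alpha>)))"
      using \<open>0 < real a\<close> \<open>0 < D\<close> \<open>0 < L a\<close>
      by (simp add: ennreal_mult[symmetric] powr_diff powr_minus_divide field_simps)
    finally show ?thesis .
  qed
  then have "(\<Sum>a=n0..t. ennreal (real a) * fst_marginal a) \<le> (\<Sum>a=n0..t. ennreal (D * (L a * real a powr (-\<alpha>))))"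
    by (rule sum_mono)
  also have "\<dots> = ennreal (D * (\<Sum>a=n0..t. L a * real a powr (-\<alpha>)))"
  proof -
    have "0 \<le> D * (L a * real a powr (-\<alpha>))" if "a \<in> {n0..t}" for a
      using that \<open>0 < D\<close> \<open>x0 \<le> real n0\<close> Potter_bounds_pos[OF P, of a] by simp
    then show ?thesis by (subst sum_ennreal) (auto simp: sum_distrib_left)
  qed
  also have "\<dots> \<le> ennreal (D * (A * L t * real t powr (1 - \<alpha>) / (1 - \<alpha> - \<eta>)))"
    using Potter_partial_sum_le[OF P _ \<open>\<alpha> + \<eta> < 1\<close> \<open>x0 \<le> real n0\<close> \<open>n0 \<le> t\<close>] \<open>0 < D\<close> \<alpha>_pos \<open>0 < \<eta>\<close>
    by (intro ennreal_leI mult_left_mono) auto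
  finally show ?thesis by (simp add: D_def mult.assoc)
qed

lemma fst_marginal_tail_le_Potter:
  assumes P: "Potter_bounds L \<eta> A x0" and "\<eta> < \<alpha>" "x0 \<le> real t"
  shows "(\<Sum>m. fst_marginal (m + t + 1))
    \<le> ennreal (A / (1 + \<alpha> - \<eta>) * A * L t * real t powr (-\<alpha>) / (\<alpha> - \<eta>))"
proof -
  define D where "D = A / (1 + \<alpha> - \<eta>)"
  have "0 < D" using Potter_bounds_const_ge_1[OF P] \<open>\<eta> < \<alpha>\<close> by (simp add: D_def)
  have "(\<Sum>m. fst_marginal (m + t + 1)) \<le> (\<Sum>m. ennreal D * ennreal (L (real (m + t + 1)) * real (m + t + 1) powr (-1 - \<alpha>)))"
  proof (intro suminf_le allI)
    fix m
    define k where "k = m + t + 1"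
    have "x0 \<le> real k" using \<open>x0 \<le> real t\<close> by (simp add: k_def)
    then have "fst_marginal k \<le> ennreal (D * (L k * real k powr (-1 - \<alpha>)))"
      using fst_marginal_le_Potter[OF P] \<open>\<eta> < \<alpha>\<close> by (simp add: D_def)
    also have "\<dots> = ennreal D * ennreal (L k * real k powr (-1 - \<alpha>))"
      using \<open>0 < D\<close> Potter_bounds_pos[OF P \<open>x0 \<le> real k\<close>] by (simp add: ennreal_mult)
    finally show "fst_marginal (m + t + 1) \<le> ennreal D * ennreal (L (real (m + t + 1)) * real (m + t + 1) powr (-1 - \<alpha>))"
      by (simp add: k_def)
  qed auto
  also have "\<dots> \<le> ennreal D * ennreal (A * L t * real t powr (-\<alpha>) / (\<alpha> - \<eta>))"
    unfolding ennreal_suminf_cmult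
    by (intro mult_left_mono Potter_tail_sum_le[OF P \<open>\<eta> < \<alpha>\<close> \<open>x0 \<le> real t\<close>]) simp
  also have "\<dots> = ennreal (D * (A * L t * real t powr (-\<alpha>) / (\<alpha> - \<eta>)))"
    using \<open>0 < D\<close> Potter_bounds_const_ge_1[OF P] Potter_bounds_pos[OF P \<open>x0 \<le> real t\<close>] \<open>\<eta> < \<alpha>\<close>
    by (subst ennreal_mult) auto
  finally show ?thesis by (simp add: D_def ac_simps)
qed

lemma trunc_mean_le_split:
  assumes "n0 \<le> t"
  shows "trunc_mean t \<le> ennreal (real t) * (\<Sum>m. fst_marginal (m + t + 1)) +
    (ennreal (real n0 * real n0) + (\<Sum>a=n0..t. ennreal (real a) * fst_marginal a))"
proof -
  define f where "f a = ennreal (real (min a t)) * fst_marginal a" for a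
  have "trunc_mean t = (\<Sum>a. f a)"
    unfolding trunc_mean_def f_def by (rule nn_integral_renewal_incr_fst)
  also have "\<dots> = (\<Sum>m. f (m + Suc t)) + (\<Sum>a<Suc t. f a)"
    by (rule suminf_offset) simp
  also have "(\<Sum>a<Suc t. f a) = (\<Sum>a<n0. f a) + (\<Sum>a=n0..t. ennreal (real a) * fst_marginal a)"
  proof -
    have "{..<Suc t} = {..<n0} \<union> {n0..t}" using \<open>n0 \<le> t\<close> by auto
    then show ?thesis by (simp add: sum.union_disjoint f_def ivl_disj_int)
  qed
  also have "(\<Sum>a<n0. f a) \<le> (\<Sum>a<n0. ennreal (real n0))"
  proof (rule sum_mono)
    fix a assume "a \<in> {..<n0}"
    then have "f a \<le> ennreal (real n0) * 1"
      unfolding f_def using fst_marginal_le_1[of a] by (intro mult_mono) auto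
    then show "f a \<le> ennreal (real n0)" by simp
  qed
  also have "(\<Sum>m. f (m + Suc t)) = ennreal (real t) * (\<Sum>m. fst_marginal (m + t + 1))"
    by (simp add: f_def)
  finally show ?thesis
    by (simp add: add_mono ennreal_of_nat_eq_real_of_nat ennreal_mult)
qed

lemma trunc_mean_le_Potter:
  assumes P: "Potter_bounds L \<eta> A x0" and "0 < \<eta>" "\<eta> < \<alpha>" "\<alpha> + \<eta> < 1" "x0 \<le> real n0" "n0 \<le> t"
  shows "trunc_mean t \<le> ennreal (real n0 * real n0 +
    A / (1 + \<alpha> - \<eta>) * A * (1 / (1 - \<alpha> - \<eta>) + 1 / (\<alpha> - \<eta>)) * (L t * real t powr (1 - \<alpha>)))"
proof -
  have "x0 \<le> real t" using \<open>x0 \<le> real n0\<close> \<open>n0 \<le> t\<close> by linarith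
  then have "0 < real t" "0 < L t" "1 \<le> A"
    using Potter_bounds_threshold_pos[OF P] Potter_bounds_pos[OF P] Potter_bounds_const_ge_1[OF P] by auto
  define X where "X = A / (1 + \<alpha> - \<eta>) * A * L t * real t powr (-\<alpha>) / (\<alpha> - \<eta>)"
  define Y where "Y = A / (1 + \<alpha> - \<eta>) * A * L t * real t powr (1 - \<alpha>) / (1 - \<alpha> - \<eta>)"
  have "0 \<le> X" "0 \<le> Y"
    using \<open>0 < L t\<close> \<open>1 \<le> A\<close> \<open>\<eta> < \<alpha>\<close> \<open>\<alpha> + \<eta> < 1\<close> \<alpha>_pos by (auto simp: X_def Y_def)
  have "trunc_mean t \<le> ennreal (real t) * (\<Sum>m. fst_marginal (m + t + 1)) +
      (ennreal (real n0 * real n0) + (\<Sum>a=n0..t. ennreal (real a) * fst_marginal a))"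
    by (rule trunc_mean_le_split[OF \<open>n0 \<le> t\<close>])
  also have "\<dots> \<le> ennreal (real t) * ennreal X + (ennreal (real n0 * real n0) + ennreal Y)"
    unfolding X_def Y_def
    by (intro add_mono mult_left_mono order_refl fst_marginal_tail_le_Potter[OF P \<open>\<eta> < \<alpha>\<close> \<open>x0 \<le> real t\<close>]
        sum_moment_fst_marginal_le_Potter[OF P \<open>0 < \<eta>\<close> \<open>\<alpha> + \<eta> < 1\<close> \<open>x0 \<le> real n0\<close> \<open>n0 \<le> t\<close>]) auto
  also have "\<dots> = ennreal (real t * X + (real n0 * real n0 + Y))"
    using \<open>0 \<le> X\<close> \<open>0 \<le> Y\<close> by (simp add: ennreal_mult)
  also have "real t * X + (real n0 * real n0 + Y) = real n0 * real n0 +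
      A / (1 + \<alpha> - \<eta>) * A * (1 / (1 - \<alpha> - \<eta>) + 1 / (\<alpha> - \<eta>)) * (L t * real t powr (1 - \<alpha>))"
  proof -
    have "real t * real t powr (-\<alpha>) = real t powr (1 - \<alpha>)"
      using \<open>0 < real t\<close> by (simp add: powr_diff powr_minus_divide)
    then have "real t * X = A / (1 + \<alpha> - \<eta>) * A * (L t * real t powr (1 - \<alpha>)) / (\<alpha> - \<eta>)"
      unfolding X_def by (simp add: ac_simps)
    then show ?thesis by (simp add: Y_def ring_distribs ac_simps)
  qed
  finally show ?thesis .
qed

lemma trunc_mean_bound:
  obtains C t0 where "0 < C" "\<And>t. t0 \<le> t \<Longrightarrow> trunc_mean t \<le> ennreal (C * (L t * real t powr (1 - \<alpha>)))"
proof -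
  define \<eta> where "\<eta> = min \<alpha> (1 - \<alpha>) / 2"
  have \<eta>: "0 < \<eta>" "\<eta> < \<alpha>" "\<alpha> + \<eta> < 1"
    using \<alpha>_pos \<alpha>_less_1 by (auto simp: \<eta>_def min_def field_simps)
  obtain A x0 where P: "Potter_bounds L \<eta> A x0"
    using slowly_varying_Potter_bounds[OF slowly_varying \<open>0 < \<eta>\<close>] by blast
  define n0 where "n0 = nat \<lceil>x0\<rceil>"
  have "x0 \<le> real n0" "1 \<le> n0"
    using Potter_bounds_threshold_pos[OF P] by (auto simp: n0_def le_nat_iff)
  define c0 where "c0 = L x0 * x0 powr \<eta> / A"
  have "0 < c0"
    using Potter_bounds_pos[OF P order_refl] Potter_bounds_threshold_pos[OF P] Potter_bounds_const_ge_1[OF P]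
    by (simp add: c0_def)
  define C where "C = real n0 * real n0 / c0 + A / (1 + \<alpha> - \<eta>) * A * (1 / (1 - \<alpha> - \<eta>) + 1 / (\<alpha> - \<eta>))"
  have "0 < C"
    unfolding C_def using \<open>0 < c0\<close> \<open>1 \<le> n0\<close> Potter_bounds_const_ge_1[OF P] \<eta>
    by (intro add_pos_pos mult_pos_pos divide_pos_pos) auto
  moreover have "trunc_mean t \<le> ennreal (C * (L t * real t powr (1 - \<alpha>)))" if "n0 \<le> t" for t
  proof -
    have "x0 \<le> real t" "1 \<le> real t" using that \<open>x0 \<le> real n0\<close> \<open>1 \<le> n0\<close> by auto
    then have "c0 \<le> L t * real t powr (1 - \<alpha>)"
      unfolding c0_def using \<eta> by (intro Potter_bounds_powr_mult_ge[OF P]) auto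
    then have "real n0 * real n0 * c0 \<le> real n0 * real n0 * (L t * real t powr (1 - \<alpha>))"
      by (intro mult_left_mono) auto
    then have "real n0 * real n0 \<le> real n0 * real n0 / c0 * (L t * real t powr (1 - \<alpha>))"
      using \<open>0 < c0\<close> by (simp add: field_simps)
    then have "real n0 * real n0 + A / (1 + \<alpha> - \<eta>) * A * (1 / (1 - \<alpha> - \<eta>) + 1 / (\<alpha> - \<eta>)) *
        (L t * real t powr (1 - \<alpha>)) \<le> C * (L t * real t powr (1 - \<alpha>))"
      by (simp add: C_def distrib_right)
    then show ?thesis
      using trunc_mean_le_Potter[OF P \<eta> \<open>x0 \<le> real n0\<close> that] by (simp add: order_trans ennreal_leI)
  qed
  ultimately show ?thesis using that by blast
qed

lemma prob_space_renewal_law: "prob_space (renewal_law \<alpha> L)"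
  unfolding renewal_law_def by (rule prob_space.prob_space_stream_space[OF prob_space_measure_pmf])

lemma AE_renewal_law_pos: "AE \<omega> in renewal_law \<alpha> L. \<forall>i. 1 \<le> fst (\<omega> !! i) \<and> 1 \<le> snd (\<omega> !! i)"
proof -
  have "AE \<omega> in stream_space (renewal_incr \<alpha> L). stream_all (\<lambda>x. 1 \<le> fst x \<and> 1 \<le> snd x) \<omega>"
    by (rule prob_space.AE_stream_all[OF prob_space_measure_pmf _ AE_renewal_incr_pos]) simp
  then show ?thesis unfolding renewal_law_def stream_all_def .
qed

lemma measurable_renewal_coords [measurable]:
  "(\<lambda>\<omega>. fst (\<omega> !! i)) \<in> measurable (renewal_law \<alpha> L) (count_space UNIV)"
  "(\<lambda>\<omega>. snd (\<omega> !! i)) \<in> measurable (renewal_law \<alpha> L) (count_space UNIV)"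
  unfolding renewal_law_def by (auto intro: measurable_compose[OF measurable_snth])

lemma measurable_card_renewal_set:
  assumes "finite B"
  shows "(\<lambda>\<omega>. real (card (renewal_set \<omega> \<inter> B))) \<in> borel_measurable (renewal_law \<alpha> L)"
proof -
  have [measurable]: "Measurable.pred (renewal_law \<alpha> L) (\<lambda>\<omega>. \<exists>j. renewal_pt \<omega> j = q)" for q
    unfolding renewal_pt_def prod_eq_iff fst_conv snd_conv by measurable
  have "card (renewal_set \<omega> \<inter> B) = (\<Sum>q\<in>B. if \<exists>j. renewal_pt \<omega> j = q then 1 else 0)" for \<omega>
  proof -
    have "renewal_set \<omega> \<inter> B = {q\<in>B. \<exists>j. renewal_pt \<omega> j = q}"
      unfolding renewal_set_def by blast
    then show ?thesis using assms by (simp add: sum.inter_filter[symmetric])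
  qed
  then show ?thesis by simp
qed

lemma prob_trunc_sum_ge_le:
  assumes "1 \<le> t" "0 \<le> c" "trunc_mean t \<le> ennreal (c * real t)"
  shows "measure (renewal_law \<alpha> L) {\<omega>\<in>space (renewal_law \<alpha> L). t \<le> (\<Sum>i<k. min (fst (\<omega> !! i)) t)}
      \<le> real k * c"
    and "measure (renewal_law \<alpha> L) {\<omega>\<in>space (renewal_law \<alpha> L). t \<le> (\<Sum>i<k. min (snd (\<omega> !! i)) t)}
      \<le> real k * c"
proof -
  interpret R: prob_space "renewal_law \<alpha> L" by (rule prob_space_renewal_law)
  have "ennreal (real k / real t) * trunc_mean t \<le> ennreal (real k / real t) * ennreal (c * real t)"
    using assms(3) by (rule mult_left_mono) simp
  also have "\<dots> = ennreal (real k * c)" using assms(1,2) by (simp add: ennreal_mult[symmetric])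
  finally have bound: "ennreal (real k / real t) * trunc_mean t \<le> ennreal (real k * c)" .
  have "0 < t" using assms(1) by simp
  have "emeasure (renewal_law \<alpha> L) {\<omega>\<in>space (renewal_law \<alpha> L). t \<le> (\<Sum>i<k. min (fst (\<omega> !! i)) t)}
      \<le> ennreal (real k / real t) * trunc_mean t"
    unfolding renewal_law_def trunc_mean_def
    by (rule prob_space.emeasure_stream_trunc_sum_ge[OF prob_space_measure_pmf]) (use \<open>0 < t\<close> in auto)
  moreover have "emeasure (renewal_law \<alpha> L) {\<omega>\<in>space (renewal_law \<alpha> L). t \<le> (\<Sum>i<k. min (snd (\<omega> !! i)) t)}
      \<le> ennreal (real k / real t) * trunc_mean t"
    unfolding renewal_law_def trunc_mean_def nn_integral_renewal_incr_snd[of "\<lambda>a. ennreal (real (min a t))", symmetric]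
    by (rule prob_space.emeasure_stream_trunc_sum_ge[OF prob_space_measure_pmf]) (use \<open>0 < t\<close> in auto)
  ultimately show "measure (renewal_law \<alpha> L) {\<omega>\<in>space (renewal_law \<alpha> L). t \<le> (\<Sum>i<k. min (fst (\<omega> !! i)) t)}
      \<le> real k * c"
    and "measure (renewal_law \<alpha> L) {\<omega>\<in>space (renewal_law \<alpha> L). t \<le> (\<Sum>i<k. min (snd (\<omega> !! i)) t)}
      \<le> real k * c"
    using bound assms(2) by (auto simp: R.emeasure_eq_measure dest: order_trans)
qed

lemma prob_box_count_ge:
  assumes "1 \<le> N" "1 \<le> M" "0 \<le> r" "0 \<le> cN" "0 \<le> cM"
    and "trunc_mean N \<le> ennreal (cN * real N)" "trunc_mean M \<le> ennreal (cM * real M)"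
  shows "1 - (r + 1) * (cN + cM)
    \<le> measure (renewal_law \<alpha> L) {\<omega>\<in>space (renewal_law \<alpha> L). r \<le> real (box_count \<omega> N M)}"
    (is "_ \<le> measure _ ?G")
proof -
  interpret R: prob_space "renewal_law \<alpha> L" by (rule prob_space_renewal_law)
  define k where "k = nat \<lceil>r\<rceil>"
  have "r \<le> real k" "real k \<le> r + 1" using \<open>0 \<le> r\<close> by (auto simp: k_def)
  define B1 where "B1 = {\<omega>\<in>space (renewal_law \<alpha> L). N \<le> (\<Sum>i<k. min (fst (\<omega> !! i)) N)}"
  define B2 where "B2 = {\<omega>\<in>space (renewal_law \<alpha> L). M \<le> (\<Sum>i<k. min (snd (\<omega> !! i)) M)}"
  have G_sets[measurable]: "?G \<in> sets (renewal_law \<alpha> L)"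
    using measurable_card_renewal_set[of "{1..N} \<times> {1..M}"] unfolding box_count_def by measurable
  have B_sets[measurable]: "B1 \<in> sets (renewal_law \<alpha> L)" "B2 \<in> sets (renewal_law \<alpha> L)"
    unfolding B1_def B2_def by measurable
  have "AE \<omega> in renewal_law \<alpha> L. \<omega> \<in> space (renewal_law \<alpha> L) \<longrightarrow> \<omega> \<in> ?G \<union> B1 \<union> B2"
    using AE_renewal_law_pos
  proof eventually_elim
    case (elim \<omega>)
    have "k \<le> box_count \<omega> N M"
      if "\<omega> \<in> space (renewal_law \<alpha> L)" "\<omega> \<notin> B1" "\<omega> \<notin> B2"
      using that elim by (intro box_count_ge sum_le_of_sum_min_less) (auto simp: B1_def B2_def not_le)
    then show ?case using \<open>r \<le> real k\<close> by force
  qed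
  then have "measure (renewal_law \<alpha> L) (space (renewal_law \<alpha> L)) \<le> measure (renewal_law \<alpha> L) (?G \<union> B1 \<union> B2)"
    by (rule R.finite_measure_mono_AE) measurable
  then have "1 \<le> measure (renewal_law \<alpha> L) (?G \<union> B1 \<union> B2)" by (simp add: R.prob_space)
  also have "\<dots> \<le> measure (renewal_law \<alpha> L) ?G + measure (renewal_law \<alpha> L) B1 + measure (renewal_law \<alpha> L) B2"
    using measure_Un_le[OF sets.Un[OF G_sets B_sets(1)] B_sets(2)] measure_Un_le[OF G_sets B_sets(1)]
    by linarith
  also have "\<dots> \<le> measure (renewal_law \<alpha> L) ?G + real k * cN + real k * cM"
    unfolding B1_def B2_def using prob_trunc_sum_ge_le assms by (intro add_mono) auto
  finally show ?thesis
    using \<open>real k \<le> r + 1\<close> assms(4,5) mult_right_mono[of "real k" "r + 1" "cN + cM"]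
    by (simp add: distrib_left)
qed

lemma box_count_lower_tail:
  assumes "0 < \<gamma>"
  obtains C where "0 < C"
    "\<And>M. (\<lambda>N. real (M N) / real N) \<longlonglongrightarrow> \<gamma> \<Longrightarrow> \<forall>\<^sub>F N in sequentially. \<forall>r\<ge>0.
       1 - C * (r + 1) * (L N * real N powr (-\<alpha>))
       \<le> measure (renewal_law \<alpha> L)
           {\<omega>\<in>space (renewal_law \<alpha> L). r \<le> real (box_count \<omega> N (M N))}"
proof -
  obtain C0 t0 where "0 < C0"
    and trunc: "\<And>t. t0 \<le> t \<Longrightarrow> trunc_mean t \<le> ennreal (C0 * (L t * real t powr (1 - \<alpha>)))"
    using trunc_mean_bound by blast
  obtain \<rho> where "0 < \<rho>" and comparable: "\<And>M :: nat \<Rightarrow> nat. (\<lambda>N. real (M N) / real N) \<longlonglongrightarrow> \<gamma> \<Longrightarrow>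
      \<forall>\<^sub>F N in sequentially. L (M N) * real (M N) powr (-\<alpha>) \<le> \<rho> * (L N * real N powr (-\<alpha>))"
    using slowly_varying_powr_comparable[OF slowly_varying less_imp_le[OF \<alpha>_pos] \<open>0 < \<gamma>\<close>] by blast
  define g where "g t = L t * real t powr (-\<alpha>)" for t :: nat
  define t1 where "t1 = max t0 2"
  have trunc_g: "trunc_mean t \<le> ennreal (C0 * g t * real t)" "0 \<le> C0 * g t" if "t1 \<le> t" for t
  proof -
    have "real t powr (1 - \<alpha>) = real t powr (-\<alpha>) * real t" using that by (simp add: powr_diff powr_minus_divide)
    then show "trunc_mean t \<le> ennreal (C0 * g t * real t)"
      using trunc[of t] that by (simp add: g_def t1_def mult_ac)
    have "0 < L t" using L_pos that by (simp add: t1_def)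
    then show "0 \<le> C0 * g t" using \<open>0 < C0\<close> by (simp add: g_def)
  qed
  have "\<forall>\<^sub>F N in sequentially. \<forall>r\<ge>0. 1 - C0 * (1 + \<rho>) * (r + 1) * g N
      \<le> measure (renewal_law \<alpha> L) {\<omega>\<in>space (renewal_law \<alpha> L). r \<le> real (box_count \<omega> N (M N))}"
    if lim: "(\<lambda>N. real (M N) / real N) \<longlonglongrightarrow> \<gamma>" for M
    using comparable[OF lim] eventually_ge_at_top[of t1]
      filterlim_at_top[THEN iffD1, OF filterlim_at_top_of_ratio[OF lim \<open>0 < \<gamma>\<close>], rule_format, of "real t1"]
  proof eventually_elim
    case (elim N)
    show ?case
    proof (intro allI impI)
      fix r :: real assume "0 \<le> r"
      with elim have "1 - (r + 1) * (C0 * g N + C0 * g (M N))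
          \<le> measure (renewal_law \<alpha> L) {\<omega>\<in>space (renewal_law \<alpha> L). r \<le> real (box_count \<omega> N (M N))}"
        using trunc_g by (intro prob_box_count_ge) (auto simp: t1_def)
      moreover have "C0 * g (M N) \<le> C0 * \<rho> * g N"
        using elim(1) \<open>0 < C0\<close> by (simp add: g_def)
      ultimately show "1 - C0 * (1 + \<rho>) * (r + 1) * g N
          \<le> measure (renewal_law \<alpha> L) {\<omega>\<in>space (renewal_law \<alpha> L). r \<le> real (box_count \<omega> N (M N))}"
        using \<open>0 \<le> r\<close> mult_left_mono[of "C0 * g (M N)" "C0 * \<rho> * g N" "r + 1"] by (simp add: algebra_simps)
    qed
  qed
  moreover have "0 < C0 * (1 + \<rho>)" using \<open>0 < C0\<close> \<open>0 < \<rho>\<close> by simp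
  ultimately show ?thesis using that unfolding g_def by (simp add: mult_ac)
qed

lemma box_count_whp:
  assumes "0 < \<gamma>" "0 < \<delta>"
  obtains \<epsilon> where "0 < \<epsilon>"
    "\<And>M. (\<lambda>N. real (M N) / real N) \<longlonglongrightarrow> \<gamma> \<Longrightarrow> \<forall>\<^sub>F N in sequentially.
       1 - \<delta> \<le> measure (renewal_law \<alpha> L) {\<omega>\<in>space (renewal_law \<alpha> L).
         \<epsilon> * real N powr \<alpha> / L N \<le> real (box_count \<omega> N (M N))}"
proof -
  obtain C where "0 < C" and tail: "\<And>M. (\<lambda>N. real (M N) / real N) \<longlonglongrightarrow> \<gamma> \<Longrightarrow> \<forall>\<^sub>F N in sequentially. \<forall>r\<ge>0.
       1 - C * (r + 1) * (L N * real N powr (-\<alpha>))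
       \<le> measure (renewal_law \<alpha> L)
           {\<omega>\<in>space (renewal_law \<alpha> L). r \<le> real (box_count \<omega> N (M N))}"
    using box_count_lower_tail[OF \<open>0 < \<gamma>\<close>] by blast
  have "((\<lambda>N. L (real N) * real N powr (-\<alpha>)) \<longlongrightarrow> 0) sequentially"
    using slowly_varying_powr_tendsto_zero[OF slowly_varying \<alpha>_pos] filterlim_real_sequentially
    by (rule filterlim_compose)
  then have "((\<lambda>N. C * (L (real N) * real N powr (-\<alpha>))) \<longlongrightarrow> 0) sequentially"
    by (rule tendsto_mult_right_zero)
  then have small: "\<forall>\<^sub>F N in sequentially. C * (L N * real N powr (-\<alpha>)) < \<delta> / 2"
    by (rule order_tendstoD(2)) (use \<open>0 < \<delta>\<close> in simp)
  define \<epsilon> where "\<epsilon> = \<delta> / (2 * C)"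
  have "\<forall>\<^sub>F N in sequentially. 1 - \<delta> \<le> measure (renewal_law \<alpha> L) {\<omega>\<in>space (renewal_law \<alpha> L).
      \<epsilon> * real N powr \<alpha> / L N \<le> real (box_count \<omega> N (M N))}"
    if "(\<lambda>N. real (M N) / real N) \<longlonglongrightarrow> \<gamma>" for M
    using tail[OF that] small eventually_ge_at_top[of 2]
  proof eventually_elim
    case (elim N)
    have "0 < L N" using L_pos elim(3) by simp
    define r where "r = \<epsilon> * real N powr \<alpha> / L N"
    have "0 \<le> r" using \<open>0 < L N\<close> \<open>0 < \<delta>\<close> \<open>0 < C\<close> by (simp add: r_def \<epsilon>_def)
    have "C * (r + 1) * (L N * real N powr (-\<alpha>)) = C * \<epsilon> + C * (L N * real N powr (-\<alpha>))"
      using \<open>0 < L N\<close> elim(3) by (simp add: r_def powr_minus_divide field_simps)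
    moreover have "C * \<epsilon> = \<delta> / 2" using \<open>0 < C\<close> by (simp add: \<epsilon>_def)
    ultimately show ?case using elim(1) \<open>0 \<le> r\<close> elim(2) unfolding r_def by fastforce
  qed
  moreover have "0 < \<epsilon>" using \<open>0 < C\<close> \<open>0 < \<delta>\<close> by (simp add: \<epsilon>_def)
  ultimately show ?thesis using that by blast
qed

end

theorem lemmaA2:
  fixes L :: "real \<Rightarrow> real" and \<alpha> \<gamma> :: real
  assumes "slowly_varying L"
    and "\<forall>n::nat. n \<ge> 2 \<longrightarrow> L (real n) > 0"
    and "((\<lambda>(n, m). Kfun \<alpha> L (n + m)) has_sum 1) ({1..} \<times> {1..})"
    and "0 < \<alpha>" and "\<alpha> < 1"
    and "\<gamma> > 0"
  shows "\<forall>\<delta>>0. \<exists>\<epsilon>>0. \<forall>M :: nat \<Rightarrow> nat.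
           (\<forall>N. M N \<ge> 1) \<longrightarrow> ((\<lambda>N. real (M N) / real N) \<longlonglongrightarrow> \<gamma>) \<longrightarrow>
           (\<forall>\<^sub>F N in sequentially.
              measure (renewal_law \<alpha> L)
                {\<omega> \<in> space (renewal_law \<alpha> L).
                   real (card (renewal_set \<omega> \<inter> ({1..N} \<times> {1..M N})))
                     \<ge> \<epsilon> * real N powr \<alpha> / L (real N)}
              \<ge> 1 - \<delta>)"
proof (intro allI impI)
  interpret bivariate_renewal L \<alpha> using assms(1-5) by unfold_locales
  fix \<delta> :: real assume "0 < \<delta>"
  obtain \<epsilon> where "0 < \<epsilon>"
    and "\<And>M. (\<lambda>N. real (M N) / real N) \<longlonglongrightarrow> \<gamma> \<Longrightarrow> \<forall>\<^sub>F N in sequentially.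
       1 - \<delta> \<le> measure (renewal_law \<alpha> L) {\<omega>\<in>space (renewal_law \<alpha> L).
         \<epsilon> * real N powr \<alpha> / L N \<le> real (card (renewal_set \<omega> \<inter> ({1..N} \<times> {1..M N})))}"
    using box_count_whp[OF assms(6) \<open>0 < \<delta>\<close>, unfolded box_count_def] by blast
  then show "\<exists>\<epsilon>>0. \<forall>M :: nat \<Rightarrow> nat. (\<forall>N. M N \<ge> 1) \<longrightarrow> ((\<lambda>N. real (M N) / real N) \<longlonglongrightarrow> \<gamma>) \<longrightarrow>
      (\<forall>\<^sub>F N in sequentially. measure (renewal_law \<alpha> L) {\<omega> \<in> space (renewal_law \<alpha> L).
         real (card (renewal_set \<omega> \<inter> ({1..N} \<times> {1..M N}))) \<ge> \<epsilon> * real N powr \<alpha> / L (real N)} \<ge> 1 - \<delta>)"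
    by blast
qed

end
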